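(* Let $k,n$ be positive integers and let $$C_{k,n,1}=\inf_{v}\ \sup_{0\neq f\in\ell^2(\mathbb{Z})}\frac{\|\nabla^{k}(v\ast f)\|_{\ell^2(\mathbb{Z})}}{\|f\|_{\ell^2(\mathbb{Z})}},$$ where the infimum is over all $v:\{-n,\dots,n\}\to\mathbb{R}$ with $v(j)=v(-j)$ for all $j$ and $\sum_{j=-n}^{n}v(j)=1$. Then for every $u:\{-n,\dots,n\}\to\mathbb{C}$ with $\sum_{j=-n}^{n}u(j)=1$, $$\sup_{0\neq f\in\ell^2(\mathbb{Z})}\frac{\|\nabla^{k}(u\ast f)\|_{\ell^2(\mathbb{Z})}}{\|f\|_{\ell^2(\mathbb{Z})}}\ \ge\ C_{k,n,1}.$$
   Context: Functions on $\{-n,\dots,n\}$ are regarded as functions on $\mathbb{Z}$ vanishing outside it; $\nabla g(k)=g(k+1)-g(k)$, $\nabla^{k}=\nabla(\nabla^{k-1})$; $(u\ast f)(m)=\sum_ju(j)f(m-j)$. Suprema are over nonzero complex-valued $f\in\ell^2(\mathbb{Z})$. *)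

theory Defs
  imports "HOL-Analysis.Analysis"
begin

definition is_l2 :: "(int \<Rightarrow> complex) \<Rightarrow> bool" where
  "is_l2 f \<longleftrightarrow> (\<lambda>j. (norm (f j))^2) summable_on UNIV"

definition l2norm :: "(int \<Rightarrow> complex) \<Rightarrow> real" where
  "l2norm f = sqrt (\<Sum>\<^sub>\<infinity>j\<in>UNIV. (norm (f j))^2)"

definition fdiff :: "(int \<Rightarrow> complex) \<Rightarrow> int \<Rightarrow> complex" where
  "fdiff g = (\<lambda>m. g (m + 1) - g m)"

definition conv :: "(int \<Rightarrow> complex) \<Rightarrow> (int \<Rightarrow> complex) \<Rightarrow> int \<Rightarrow> complex" where
  "conv u f = (\<lambda>m. \<Sum>\<^sub>\<infinity>j\<in>UNIV. u j * f (m - j))"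

definition opnorm :: "nat \<Rightarrow> (int \<Rightarrow> complex) \<Rightarrow> real" where
  "opnorm k u = Sup {l2norm ((fdiff ^^ k) (conv u f)) / l2norm f | f. is_l2 f \<and> f \<noteq> (\<lambda>_. 0)}"

definition Cconst :: "nat \<Rightarrow> nat \<Rightarrow> real" where
  "Cconst k n = Inf {opnorm k (\<lambda>j. complex_of_real (v j)) | v :: int \<Rightarrow> real.
      (\<forall>j. j \<notin> {- int n..int n} \<longrightarrow> v j = 0) \<and> (\<forall>j. v j = v (- j)) \<and>
      (\<Sum>j = - int n..int n. v j) = 1}"

end

theory Submission
  imports Defs
begin

text \<open>
  For a finitely supported kernel w, the operator f \<mapsto> \<nabla>^k (w * f) is bounded on l2(\<int>), and its norm
  is subadditive and homogeneous in w. Conjugating the kernel (conjugate f as well) and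
  reflecting it (reflect f as well; \<nabla>^k then picks up a sign and a shift) do not increase the
  norm. The symmetric real kernel v(j) = Re (u(j) + u(-j)) / 2 is the average of u, its
  conjugate, its reflection and its conjugated reflection, so its operator norm is at most that
  of u; since v has sum 1, it is admissible in the infimum defining C.
\<close>

lemma l2norm_nonneg: "0 \<le> l2norm f"
  unfolding l2norm_def by (simp add: infsum_nonneg)

lemma l2norm_power2: "(l2norm f)\<^sup>2 = (\<Sum>\<^sub>\<infinity>j. (norm (f j))\<^sup>2)"
  unfolding l2norm_def by (simp add: infsum_nonneg)

lemma L2_set_le_l2norm:
  assumes "is_l2 f" "finite F"
  shows "L2_set (\<lambda>j. norm (f j)) F \<le> l2norm f"
proof -
  have "(\<Sum>j\<in>F. (norm (f j))\<^sup>2) \<le> (l2norm f)\<^sup>2"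
    unfolding l2norm_power2 using assms unfolding is_l2_def
    by (intro finite_sum_le_infsum) auto
  then show ?thesis
    unfolding L2_set_def using l2norm_nonneg by (simp add: real_le_lsqrt sum_nonneg)
qed

lemma l2norm_pos:
  assumes "is_l2 f" "f \<noteq> (\<lambda>_. 0)"
  shows "0 < l2norm f"
proof -
  obtain j where "f j \<noteq> 0" using assms(2) by auto
  then have "0 < L2_set (\<lambda>j. norm (f j)) {j}" by simp
  also have "\<dots> \<le> l2norm f" using L2_set_le_l2norm[OF assms(1), of "{j}"] by simp
  finally show ?thesis .
qed

lemma is_l2_zero: "is_l2 (\<lambda>_. 0)"
  unfolding is_l2_def by simp

lemma l2norm_zero [simp]: "l2norm (\<lambda>_. 0) = 0"
  unfolding l2norm_def by simp

lemma is_l2_add: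
  assumes "is_l2 f" "is_l2 g"
  shows "is_l2 (\<lambda>m. f m + g m)"
proof -
  have "(\<lambda>j. 2 * (norm (f j))\<^sup>2 + 2 * (norm (g j))\<^sup>2) summable_on UNIV"
    using assms unfolding is_l2_def
    by (intro summable_on_add summable_on_cmult_right) auto
  moreover have "(norm (f j + g j))\<^sup>2 \<le> 2 * (norm (f j))\<^sup>2 + 2 * (norm (g j))\<^sup>2" for j
    by (smt (verit) norm_triangle_ineq power_mono sum_squares_bound norm_ge_zero power2_sum)
  ultimately show ?thesis
    unfolding is_l2_def by (rule summable_on_comparison_test) auto
qed

lemma l2norm_add_le:
  assumes "is_l2 f" "is_l2 g"
  shows "l2norm (\<lambda>m. f m + g m) \<le> l2norm f + l2norm g"
proof -
  have "(l2norm (\<lambda>m. f m + g m))\<^sup>2 \<le> (l2norm f + l2norm g)\<^sup>2"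
    unfolding l2norm_power2
  proof (rule infsum_le_finite_sums)
    show "(\<lambda>j. (norm (f j + g j))\<^sup>2) summable_on UNIV"
      using is_l2_add[OF assms] unfolding is_l2_def .
  next
    fix F :: "int set" assume "finite F"
    have "L2_set (\<lambda>j. norm (f j + g j)) F \<le> L2_set (\<lambda>j. norm (f j) + norm (g j)) F"
      by (rule L2_set_mono) (auto intro: norm_triangle_ineq)
    also have "\<dots> \<le> L2_set (\<lambda>j. norm (f j)) F + L2_set (\<lambda>j. norm (g j)) F"
      by (rule L2_set_triangle_ineq)
    also have "\<dots> \<le> l2norm f + l2norm g"
      using L2_set_le_l2norm[OF assms(1) \<open>finite F\<close>] L2_set_le_l2norm[OF assms(2) \<open>finite F\<close>]
      by simp
    finally show "(\<Sum>j\<in>F. (norm (f j + g j))\<^sup>2) \<le> (l2norm f + l2norm g)\<^sup>2"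
      unfolding L2_set_def by (rule sqrt_le_D)
  qed
  then show ?thesis
    using l2norm_nonneg[of f] l2norm_nonneg[of g] by (meson power2_le_imp_le add_nonneg_nonneg)
qed

lemma is_l2_scale: "is_l2 f \<Longrightarrow> is_l2 (\<lambda>m. c * f m)"
  unfolding is_l2_def by (simp add: norm_mult power_mult_distrib summable_on_cmult_right)

lemma l2norm_scale: "l2norm (\<lambda>m. c * f m) = norm c * l2norm f"
  unfolding l2norm_def
  by (simp add: norm_mult power_mult_distrib infsum_cmult_right' real_sqrt_mult)

lemma is_l2_reindex: "bij h \<Longrightarrow> is_l2 (\<lambda>m. f (h m)) \<longleftrightarrow> is_l2 f"
  unfolding is_l2_def using summable_on_reindex_bij_betw[of h UNIV UNIV "\<lambda>j. (norm (f j))\<^sup>2"] by simp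

lemma l2norm_reindex: "bij h \<Longrightarrow> l2norm (\<lambda>m. f (h m)) = l2norm f"
  unfolding l2norm_def using infsum_reindex_bij_betw[of h UNIV UNIV "\<lambda>j. (norm (f j))\<^sup>2"] by simp

lemma is_l2_cnj [simp]: "is_l2 (\<lambda>m. cnj (f m)) \<longleftrightarrow> is_l2 f"
  unfolding is_l2_def by simp

lemma l2norm_cnj [simp]: "l2norm (\<lambda>m. cnj (f m)) = l2norm f"
  unfolding l2norm_def by simp

lemma is_l2_sum: "(\<And>i. i \<in> A \<Longrightarrow> is_l2 (g i)) \<Longrightarrow> is_l2 (\<lambda>m. \<Sum>i\<in>A. g i m)"
  by (induction A rule: infinite_finite_induct) (auto intro: is_l2_zero is_l2_add)

lemma l2norm_sum_le:
  "(\<And>i. i \<in> A \<Longrightarrow> is_l2 (g i)) \<Longrightarrow> l2norm (\<lambda>m. \<Sum>i\<in>A. g i m) \<le> (\<Sum>i\<in>A. l2norm (g i))"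
proof (induction A rule: infinite_finite_induct)
  case (insert a A)
  then have "l2norm (\<lambda>m. g a m + (\<Sum>i\<in>A. g i m)) \<le> l2norm (g a) + l2norm (\<lambda>m. \<Sum>i\<in>A. g i m)"
    by (intro l2norm_add_le is_l2_sum) auto
  with insert show ?case by simp
qed simp_all

lemma is_l2_shift: "is_l2 (\<lambda>m. f (m - j)) \<longleftrightarrow> is_l2 f"
  using is_l2_reindex[OF bij_plus_right[of "- j"]] by simp

lemma l2norm_shift: "l2norm (\<lambda>m. f (m - j)) = l2norm f"
  using l2norm_reindex[OF bij_plus_right[of "- j"]] by simp

lemma conv_eq_sum:
  assumes "finite I" "{j. w j \<noteq> 0} \<subseteq> I"
  shows "conv w f m = (\<Sum>j\<in>I. w j * f (m - j))"
proof -
  have "conv w f m = (\<Sum>\<^sub>\<infinity>j\<in>I. w j * f (m - j))"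
    unfolding conv_def using assms(2) by (intro infsum_cong_neutral) auto
  then show ?thesis using assms(1) by simp
qed

lemma conv_add:
  assumes "finite {j. w j \<noteq> 0}" "finite {j. v j \<noteq> 0}"
  shows "conv (\<lambda>j. w j + v j) f = (\<lambda>m. conv w f m + conv v f m)"
proof
  fix m
  let ?I = "{j. w j \<noteq> 0} \<union> {j. v j \<noteq> 0}"
  have "finite ?I" using assms by simp
  then show "conv (\<lambda>j. w j + v j) f m = conv w f m + conv v f m"
    by (subst (1 2 3) conv_eq_sum[of ?I]) (auto simp: distrib_right sum.distrib)
qed

lemma conv_scale: "conv (\<lambda>j. c * w j) f = (\<lambda>m. c * conv w f m)"
  unfolding conv_def by (simp add: mult.assoc infsum_cmult_right')

lemma conv_cnj: "conv (\<lambda>j. cnj (w j)) f = (\<lambda>m. cnj (conv w (\<lambda>m. cnj (f m)) m))"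
  unfolding conv_def infsum_cnj[symmetric] by simp

lemma conv_reflect: "conv (\<lambda>j. w (- j)) f = (\<lambda>m. conv w (\<lambda>m. f (- m)) (- m))"
proof
  fix m
  show "conv (\<lambda>j. w (- j)) f m = conv w (\<lambda>m. f (- m)) (- m)"
    unfolding conv_def using infsum_reindex_bij_betw[OF bij_uminus, of "\<lambda>j. w j * f (m + j)"]
    by (simp add: algebra_simps)
qed

lemma conv_eq_sum_support:
  "finite {j. w j \<noteq> 0} \<Longrightarrow> conv w f = (\<lambda>m. \<Sum>j | w j \<noteq> 0. w j * f (m - j))"
  using conv_eq_sum[of "{j. w j \<noteq> 0}"] by auto

lemma is_l2_conv:
  assumes "finite {j. w j \<noteq> 0}" "is_l2 f"
  shows "is_l2 (conv w f)"
  unfolding conv_eq_sum_support[OF assms(1)] using assms(2)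
  by (intro is_l2_sum is_l2_scale) (simp add: is_l2_shift)

lemma l2norm_conv_le:
  assumes "finite {j. w j \<noteq> 0}" "is_l2 f"
  shows "l2norm (conv w f) \<le> (\<Sum>j | w j \<noteq> 0. norm (w j)) * l2norm f"
proof -
  have "l2norm (conv w f) \<le> (\<Sum>j | w j \<noteq> 0. l2norm (\<lambda>m. w j * f (m - j)))"
    unfolding conv_eq_sum_support[OF assms(1)] using assms(2)
    by (intro l2norm_sum_le is_l2_scale) (simp add: is_l2_shift)
  then show ?thesis by (simp add: l2norm_scale l2norm_shift sum_distrib_right)
qed

lemma fdiff_apply: "fdiff g m = g (m + 1) - g m"
  unfolding fdiff_def ..

lemma fdiff_eq_add_scale: "fdiff g = (\<lambda>m. g (m + 1) + (- 1) * g m)"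
  unfolding fdiff_def by simp

lemma is_l2_fdiff: "is_l2 g \<Longrightarrow> is_l2 (fdiff g)"
  unfolding fdiff_eq_add_scale using is_l2_shift[of g "- 1"] by (intro is_l2_add is_l2_scale) auto

lemma l2norm_fdiff_le:
  assumes "is_l2 g"
  shows "l2norm (fdiff g) \<le> 2 * l2norm g"
proof -
  have "l2norm (fdiff g) \<le> l2norm (\<lambda>m. g (m + 1)) + l2norm (\<lambda>m. (- 1) * g m)"
    unfolding fdiff_eq_add_scale using assms is_l2_shift[of g "- 1"] by (intro l2norm_add_le is_l2_scale) auto
  also have "\<dots> = 2 * l2norm g"
    using l2norm_shift[of g "- 1"] l2norm_scale[of "- 1" g] by simp
  finally show ?thesis .
qed

lemma is_l2_fdiff_pow: "is_l2 g \<Longrightarrow> is_l2 ((fdiff ^^ k) g)"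
  by (induction k) (auto intro: is_l2_fdiff)

lemma l2norm_fdiff_pow_le:
  assumes "is_l2 g"
  shows "l2norm ((fdiff ^^ k) g) \<le> 2 ^ k * l2norm g"
proof (induction k)
  case (Suc k)
  have "l2norm ((fdiff ^^ Suc k) g) \<le> 2 * l2norm ((fdiff ^^ k) g)"
    using l2norm_fdiff_le[OF is_l2_fdiff_pow[OF assms]] by simp
  with Suc show ?case by simp
qed simp

lemma fdiff_pow_add: "(fdiff ^^ k) (\<lambda>m. g m + h m) = (\<lambda>m. (fdiff ^^ k) g m + (fdiff ^^ k) h m)"
  by (induction k) (auto simp: fdiff_def)

lemma fdiff_pow_scale: "(fdiff ^^ k) (\<lambda>m. c * g m) = (\<lambda>m. c * (fdiff ^^ k) g m)"
  by (induction k) (auto simp: fdiff_def algebra_simps)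

lemma fdiff_pow_cnj: "(fdiff ^^ k) (\<lambda>m. cnj (g m)) = (\<lambda>m. cnj ((fdiff ^^ k) g m))"
  by (induction k) (auto simp: fdiff_def)

lemma fdiff_pow_reflect:
  "(fdiff ^^ k) (\<lambda>m. g (- m)) = (\<lambda>m. (- 1) ^ k * (fdiff ^^ k) g (- m - int k))"
proof (induction k)
  case (Suc k)
  define G where "G = (fdiff ^^ k) g"
  show ?case
  proof
    fix m
    have shift: "- (m + 1) - int k = - m - int (Suc k)" "- m - int k = - m - int (Suc k) + 1"
      by simp_all
    have "(fdiff ^^ Suc k) (\<lambda>m. g (- m)) m = fdiff (\<lambda>m. (- 1) ^ k * G (- m - int k)) m"
      by (simp add: Suc.IH G_def)
    also have "\<dots> = (- 1) ^ k * G (- (m + 1) - int k) - (- 1) ^ k * G (- m - int k)"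
      unfolding fdiff_apply ..
    also have "\<dots> = (- 1) ^ Suc k * (G (- m - int (Suc k) + 1) - G (- m - int (Suc k)))"
      unfolding shift by (simp add: algebra_simps)
    finally show "(fdiff ^^ Suc k) (\<lambda>m. g (- m)) m = (- 1) ^ Suc k * (fdiff ^^ Suc k) g (- m - int (Suc k))"
      unfolding G_def fdiff_apply[symmetric] by simp
  qed
qed simp

lemma is_l2_diff_conv: "finite {j. w j \<noteq> 0} \<Longrightarrow> is_l2 f \<Longrightarrow> is_l2 ((fdiff ^^ k) (conv w f))"
  by (intro is_l2_fdiff_pow is_l2_conv)

lemma l2norm_diff_conv_le:
  assumes "finite {j. w j \<noteq> 0}" "is_l2 f"
  shows "l2norm ((fdiff ^^ k) (conv w f)) \<le> 2 ^ k * (\<Sum>j | w j \<noteq> 0. norm (w j)) * l2norm f"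
proof -
  have "l2norm ((fdiff ^^ k) (conv w f)) \<le> 2 ^ k * l2norm (conv w f)"
    by (rule l2norm_fdiff_pow_le[OF is_l2_conv[OF assms]])
  also have "\<dots> \<le> 2 ^ k * ((\<Sum>j | w j \<noteq> 0. norm (w j)) * l2norm f)"
    by (intro mult_left_mono l2norm_conv_le[OF assms]) simp
  finally show ?thesis by (simp add: mult.assoc)
qed

lemma ex_nonzero_l2: "\<exists>f. is_l2 f \<and> f \<noteq> (\<lambda>_. 0)"
proof (intro exI conjI)
  let ?\<delta> = "\<lambda>j::int. if j = 0 then 1 else (0::complex)"
  have "((\<lambda>j. (norm (?\<delta> j))\<^sup>2) summable_on UNIV) \<longleftrightarrow> ((\<lambda>j. (norm (?\<delta> j))\<^sup>2) summable_on {0})"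
    by (intro summable_on_cong_neutral) auto
  then show "is_l2 ?\<delta>" unfolding is_l2_def by simp
  show "?\<delta> \<noteq> (\<lambda>_. 0)" by (metis one_neq_zero)
qed

lemma opnorm_le:
  assumes "\<And>f. is_l2 f \<Longrightarrow> l2norm ((fdiff ^^ k) (conv w f)) \<le> c * l2norm f"
  shows "opnorm k w \<le> c"
  unfolding opnorm_def
proof (rule cSup_least)
  show "{l2norm ((fdiff ^^ k) (conv w f)) / l2norm f | f. is_l2 f \<and> f \<noteq> (\<lambda>_. 0)} \<noteq> {}"
    using ex_nonzero_l2 by blast
next
  fix x assume "x \<in> {l2norm ((fdiff ^^ k) (conv w f)) / l2norm f | f. is_l2 f \<and> f \<noteq> (\<lambda>_. 0)}"
  then obtain f where "x = l2norm ((fdiff ^^ k) (conv w f)) / l2norm f" "is_l2 f" "f \<noteq> (\<lambda>_. 0)"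
    by blast
  with assms l2norm_pos show "x \<le> c" by (simp add: pos_divide_le_eq)
qed

lemma l2norm_le_opnorm:
  assumes "finite {j. w j \<noteq> 0}" "is_l2 f"
  shows "l2norm ((fdiff ^^ k) (conv w f)) \<le> opnorm k w * l2norm f"
proof (cases "f = (\<lambda>_. 0)")
  case True
  then show ?thesis using l2norm_diff_conv_le[OF assms, of k] by simp
next
  case False
  let ?B = "2 ^ k * (\<Sum>j | w j \<noteq> 0. norm (w j))"
  let ?S = "{l2norm ((fdiff ^^ k) (conv w g)) / l2norm g | g. is_l2 g \<and> g \<noteq> (\<lambda>_. 0)}"
  have "bdd_above ?S"
  proof (rule bdd_aboveI)
    fix x assume "x \<in> ?S"
    then obtain g where "x = l2norm ((fdiff ^^ k) (conv w g)) / l2norm g" "is_l2 g" "g \<noteq> (\<lambda>_. 0)"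
      by blast
    with l2norm_diff_conv_le[OF assms(1)] l2norm_pos show "x \<le> ?B"
      by (simp add: pos_divide_le_eq)
  qed
  moreover have "l2norm ((fdiff ^^ k) (conv w f)) / l2norm f \<in> ?S"
    using assms(2) False by blast
  ultimately have "l2norm ((fdiff ^^ k) (conv w f)) / l2norm f \<le> opnorm k w"
    unfolding opnorm_def by (rule cSup_upper[rotated])
  with l2norm_pos[OF assms(2) False] show ?thesis by (simp add: pos_divide_le_eq)
qed

lemma opnorm_nonneg:
  assumes "finite {j. w j \<noteq> 0}"
  shows "0 \<le> opnorm k w"
proof -
  obtain f where f: "is_l2 f" "f \<noteq> (\<lambda>_. 0)" using ex_nonzero_l2 by blast
  have "0 \<le> opnorm k w * l2norm f"
    using l2norm_le_opnorm[OF assms f(1), of k] l2norm_nonneg order_trans by blast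
  with l2norm_pos[OF f] show ?thesis by (simp add: zero_le_mult_iff)
qed

lemma opnorm_add_le:
  assumes "finite {j. w j \<noteq> 0}" "finite {j. v j \<noteq> 0}"
  shows "opnorm k (\<lambda>j. w j + v j) \<le> opnorm k w + opnorm k v"
proof (rule opnorm_le)
  fix f assume f: "is_l2 f"
  have "l2norm ((fdiff ^^ k) (conv (\<lambda>j. w j + v j) f))
      \<le> l2norm ((fdiff ^^ k) (conv w f)) + l2norm ((fdiff ^^ k) (conv v f))"
    unfolding conv_add[OF assms] fdiff_pow_add using assms f by (intro l2norm_add_le is_l2_diff_conv)
  also have "\<dots> \<le> opnorm k w * l2norm f + opnorm k v * l2norm f"
    using assms f by (intro add_mono l2norm_le_opnorm)
  finally show "l2norm ((fdiff ^^ k) (conv (\<lambda>j. w j + v j) f)) \<le> (opnorm k w + opnorm k v) * l2norm f"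
    by (simp add: distrib_right)
qed

lemma opnorm_scale_le:
  assumes "finite {j. w j \<noteq> 0}"
  shows "opnorm k (\<lambda>j. c * w j) \<le> norm c * opnorm k w"
proof (rule opnorm_le)
  fix f assume "is_l2 f"
  then have "norm c * l2norm ((fdiff ^^ k) (conv w f)) \<le> norm c * (opnorm k w * l2norm f)"
    by (intro mult_left_mono l2norm_le_opnorm assms) simp_all
  then show "l2norm ((fdiff ^^ k) (conv (\<lambda>j. c * w j) f)) \<le> norm c * opnorm k w * l2norm f"
    by (simp add: conv_scale fdiff_pow_scale l2norm_scale mult.assoc)
qed

lemma opnorm_cnj_le:
  assumes "finite {j. w j \<noteq> 0}"
  shows "opnorm k (\<lambda>j. cnj (w j)) \<le> opnorm k w"
proof (rule opnorm_le)
  fix f assume "is_l2 f"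
  then show "l2norm ((fdiff ^^ k) (conv (\<lambda>j. cnj (w j)) f)) \<le> opnorm k w * l2norm f"
    using l2norm_le_opnorm[OF assms, of "\<lambda>m. cnj (f m)" k] by (simp add: conv_cnj fdiff_pow_cnj)
qed

lemma opnorm_reflect_le:
  assumes "finite {j. w j \<noteq> 0}"
  shows "opnorm k (\<lambda>j. w (- j)) \<le> opnorm k w"
proof (rule opnorm_le)
  fix f assume "is_l2 f"
  have reflect: "bij (\<lambda>m::int. - m - int k)"
    by (rule bij_betwI[where g = "\<lambda>m. - m - int k"]) auto
  have "l2norm ((fdiff ^^ k) (conv (\<lambda>j. w (- j)) f)) = l2norm ((fdiff ^^ k) (conv w (\<lambda>m. f (- m))))"
    by (simp add: conv_reflect fdiff_pow_reflect l2norm_scale norm_power l2norm_reindex[OF reflect])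
  also have "\<dots> \<le> opnorm k w * l2norm f"
    using l2norm_le_opnorm[OF assms, of "\<lambda>m. f (- m)" k] \<open>is_l2 f\<close>
    by (simp add: is_l2_reindex[OF bij_uminus] l2norm_reindex[OF bij_uminus])
  finally show "l2norm ((fdiff ^^ k) (conv (\<lambda>j. w (- j)) f)) \<le> opnorm k w * l2norm f" .
qed

lemma finite_nonzero_add:
  "finite {j. w j \<noteq> 0} \<Longrightarrow> finite {j. v j \<noteq> 0} \<Longrightarrow> finite {j. w j + v j \<noteq> (0::complex)}"
  by (rule finite_subset[of _ "{j. w j \<noteq> 0} \<union> {j. v j \<noteq> 0}"]) auto

lemma finite_nonzero_reflect: "finite {j. w j \<noteq> 0} \<Longrightarrow> finite {j::int. w (- j) \<noteq> 0}"
  using finite_vimageI[of "{j. w j \<noteq> 0}" uminus] by (simp add: vimage_def)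

lemma opnorm_symmetrize_le:
  assumes "finite {j. u j \<noteq> 0}"
  shows "opnorm k (\<lambda>j. complex_of_real (Re (u j + u (- j)) / 2)) \<le> opnorm k u"
proof -
  let ?u' = "\<lambda>j. cnj (u j)" and ?r = "\<lambda>j. u (- j)" and ?r' = "\<lambda>j. cnj (u (- j))"
  have fin: "finite {j. ?u' j \<noteq> 0}" "finite {j. ?r j \<noteq> 0}" "finite {j. ?r' j \<noteq> 0}"
    using assms finite_nonzero_reflect[OF assms] by simp_all
  have "(\<lambda>j. complex_of_real (Re (u j + u (- j)) / 2)) = (\<lambda>j. (1 / 4) * (u j + ?u' j + ?r j + ?r' j))"
    by (simp add: fun_eq_iff complex_eq_iff)
  then have "opnorm k (\<lambda>j. complex_of_real (Re (u j + u (- j)) / 2))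
      \<le> norm (1 / 4 :: complex) * opnorm k (\<lambda>j. u j + ?u' j + ?r j + ?r' j)"
    using assms fin by (simp only:) (intro opnorm_scale_le finite_nonzero_add)
  also have "\<dots> \<le> (1 / 4) * (opnorm k u + opnorm k ?u' + opnorm k ?r + opnorm k ?r')"
  proof -
    have "opnorm k (\<lambda>j. u j + ?u' j + ?r j + ?r' j) \<le> opnorm k (\<lambda>j. u j + ?u' j + ?r j) + opnorm k ?r'"
      using assms fin by (intro opnorm_add_le finite_nonzero_add)
    also have "\<dots> \<le> opnorm k (\<lambda>j. u j + ?u' j) + opnorm k ?r + opnorm k ?r'"
      using assms fin by (intro add_right_mono opnorm_add_le finite_nonzero_add)
    also have "\<dots> \<le> opnorm k u + opnorm k ?u' + opnorm k ?r + opnorm k ?r'"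
      using assms fin by (intro add_right_mono opnorm_add_le)
    finally show ?thesis by simp
  qed
  also have "\<dots> \<le> opnorm k u"
    using opnorm_cnj_le[OF assms, of k] opnorm_reflect_le[OF assms, of k] opnorm_cnj_le[OF fin(2), of k]
    by (simp add: field_simps)
  finally show ?thesis .
qed

lemma Cconst_le_opnorm:
  assumes "\<forall>j. j \<notin> {- int n..int n} \<longrightarrow> v j = 0" "\<forall>j. v j = v (- j)" "(\<Sum>j = - int n..int n. v j) = 1"
  shows "Cconst k n \<le> opnorm k (\<lambda>j. complex_of_real (v j))"
proof -
  let ?V = "{opnorm k (\<lambda>j. complex_of_real (v j)) | v :: int \<Rightarrow> real.
      (\<forall>j. j \<notin> {- int n..int n} \<longrightarrow> v j = 0) \<and> (\<forall>j. v j = v (- j)) \<and> (\<Sum>j = - int n..int n. v j) = 1}"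
  have "opnorm k (\<lambda>j. complex_of_real (v j)) \<in> ?V"
    using assms by blast
  moreover have "bdd_below ?V"
  proof (rule bdd_belowI)
    fix x assume "x \<in> ?V"
    then obtain w :: "int \<Rightarrow> real" where "x = opnorm k (\<lambda>j. complex_of_real (w j))"
      and "\<forall>j. j \<notin> {- int n..int n} \<longrightarrow> w j = 0"
      by blast
    moreover from this(2) have "finite {j. complex_of_real (w j) \<noteq> 0}"
      by (intro finite_subset[OF _ finite_atLeastAtMost_int[of "- int n" "int n"]]) auto
    ultimately show "0 \<le> x" using opnorm_nonneg by simp
  qed
  ultimately show ?thesis
    unfolding Cconst_def by (rule cInf_lower)
qed

theorem lemma5p1:
  fixes k n :: nat and u :: "int \<Rightarrow> complex"
  assumes "k > 0" and "n > 0"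
    and "\<forall>j. j \<notin> {- int n..int n} \<longrightarrow> u j = 0"
    and "(\<Sum>j = - int n..int n. u j) = 1"
  shows "opnorm k u \<ge> Cconst k n"
proof -
  define v where "v j = Re (u j + u (- j)) / 2" for j
  have reflect_sum: "(\<Sum>j = - int n..int n. u (- j)) = (\<Sum>j = - int n..int n. u j)"
    by (rule sum.reindex_bij_witness[where i = uminus and j = uminus]) auto
  have "\<forall>j. j \<notin> {- int n..int n} \<longrightarrow> v j = 0"
  proof (intro allI impI)
    fix j assume "j \<notin> {- int n..int n}"
    moreover from this have "- j \<notin> {- int n..int n}" by auto
    ultimately show "v j = 0" using assms(3) by (simp add: v_def)
  qed
  moreover have "\<forall>j. v j = v (- j)"
    by (simp add: v_def add.commute)
  moreover have "(\<Sum>j = - int n..int n. v j) = 1"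
    using assms(4) reflect_sum by (simp add: v_def sum_divide_distrib[symmetric] sum.distrib flip: Re_sum)
  ultimately have "Cconst k n \<le> opnorm k (\<lambda>j. complex_of_real (v j))"
    by (rule Cconst_le_opnorm)
  also have "\<dots> \<le> opnorm k u"
    unfolding v_def using assms(3)
    by (intro opnorm_symmetrize_le finite_subset[OF _ finite_atLeastAtMost_int[of "- int n" "int n"]]) auto
  finally show ?thesis .
qed

end
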